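(* For every $b>1$ and every $\delta>0$ there exists an instance (a finite directed acyclic graph with nonnegative edge costs, start node $s$ and target node $t$) on which the cost $C_s(s)$ incurred by the sophisticated agent with present-bias parameter $b$ is at least $(b-\delta)$ times the cost $C_n(s)$ incurred by the naive agent with present-bias parameter $b$. That is, the ratio of the sophisticated agent's cost to the naive agent's cost can be arbitrarily close to $b$.
   Context: An instance is a finite directed acyclic graph $G=(V,E)$ with nonnegative edge costs $c(u,v)$, start node $s$ and target node $t$, where $t$ is the unique node with no outgoing edges. $C_o(u)$ denotes the minimum cost of a $u$–$t$ path. Sophisticated agent with bias $b$: $C_s(t)=0$, and for $u\ne t$, $S_s(u)\in\arg\min_{v:(u,v)\in E}(b\,c(u,v)+C_s(v))$, $C_s(u)=c(u,S_s(u))+C_s(S_s(u))$. Naive agent with bias $b$: $C_n(t)=0$, and for $u\ne t$, $S_n(u)\in\arg\min_{v:(u,v)\in E}(b\,c(u,v)+C_o(v))$, $C_n(u)=c(u,S_n(u))+C_n(S_n(u))$. Each agent starting at $s$ repeatedly moves to its chosen successor until reaching $t$; its incurred cost is $C_s(s)$, respectively $C_n(s)$. *)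

theory Defs
  imports Complex_Main
begin

definition is_instance :: "nat set \<Rightarrow> (nat \<times> nat) set \<Rightarrow> (nat \<Rightarrow> nat \<Rightarrow> real) \<Rightarrow> nat \<Rightarrow> nat \<Rightarrow> bool" where
  "is_instance V E c s t \<longleftrightarrow>
     finite V \<and> E \<subseteq> V \<times> V \<and> acyclic E \<and> s \<in> V \<and> t \<in> V \<and>
     (\<forall>u v. (u, v) \<in> E \<longrightarrow> c u v \<ge> 0) \<and>
     (\<forall>u\<in>V. (\<not> (\<exists>v. (u, v) \<in> E)) \<longleftrightarrow> u = t)"

definition is_path :: "(nat \<times> nat) set \<Rightarrow> nat list \<Rightarrow> bool" where
  "is_path E p \<longleftrightarrow> p \<noteq> [] \<and> (\<forall>i. Suc i < length p \<longrightarrow> (p ! i, p ! Suc i) \<in> E)"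

definition path_cost :: "(nat \<Rightarrow> nat \<Rightarrow> real) \<Rightarrow> nat list \<Rightarrow> real" where
  "path_cost c p = (\<Sum>i<length p - 1. c (p ! i) (p ! Suc i))"

definition opt_cost :: "(nat \<times> nat) set \<Rightarrow> (nat \<Rightarrow> nat \<Rightarrow> real) \<Rightarrow> nat \<Rightarrow> nat \<Rightarrow> real" where
  "opt_cost E c t u = Min {path_cost c p | p. is_path E p \<and> hd p = u \<and> last p = t}"

definition soph_agent :: "nat set \<Rightarrow> (nat \<times> nat) set \<Rightarrow> (nat \<Rightarrow> nat \<Rightarrow> real) \<Rightarrow> nat \<Rightarrow> real
     \<Rightarrow> (nat \<Rightarrow> nat) \<Rightarrow> (nat \<Rightarrow> real) \<Rightarrow> bool" where
  "soph_agent V E c t b S C \<longleftrightarrow>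
     C t = 0 \<and>
     (\<forall>u\<in>V - {t}. (u, S u) \<in> E \<and>
        (\<forall>v. (u, v) \<in> E \<longrightarrow> b * c u (S u) + C (S u) \<le> b * c u v + C v) \<and>
        C u = c u (S u) + C (S u))"

definition naive_agent :: "nat set \<Rightarrow> (nat \<times> nat) set \<Rightarrow> (nat \<Rightarrow> nat \<Rightarrow> real) \<Rightarrow> nat \<Rightarrow> real
     \<Rightarrow> (nat \<Rightarrow> nat) \<Rightarrow> (nat \<Rightarrow> real) \<Rightarrow> bool" where
  "naive_agent V E c t b S C \<longleftrightarrow>
     C t = 0 \<and>
     (\<forall>u\<in>V - {t}. (u, S u) \<in> E \<and>
        (\<forall>v. (u, v) \<in> E \<longrightarrow> b * c u (S u) + opt_cost E c t (S u) \<le> b * c u v + opt_cost E c t v) \<and>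
        C u = c u (S u) + C (S u))"

end

theory Submission
  imports Defs
begin

text \<open>
  The instance has start 0 and target 1. At node 2 one can finish at cost \<open>P\<close>, or move for free
  to node 3 and finish there at cost \<open>Q\<close>; since \<open>P < Q < b P\<close>, both agents procrastinate and pay
  \<open>Q\<close>. At node 0 one either pays 1 to reach node 2, or moves for free to node 4 and pays \<open>R\<close>
  there, where \<open>b + P < R < b + Q\<close>. The naive agent expects to pay only \<open>P\<close> after node 2, takes
  the first route and incurs \<open>1 + Q\<close>; the sophisticated agent foresees \<open>Q\<close>, takes the second
  route and incurs \<open>R > b\<close>. Letting \<open>P, Q \<rightarrow> 0\<close>, the ratio \<open>R / (1 + Q)\<close> tends to \<open>b\<close>.
\<close>

definition paths_to :: "(nat \<times> nat) set \<Rightarrow> nat \<Rightarrow> nat \<Rightarrow> nat list set" where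
  "paths_to E t u = {p. is_path E p \<and> hd p = u \<and> last p = t}"

lemma opt_cost_eq_Min_paths_to: "opt_cost E c t u = Min (path_cost c ` paths_to E t u)"
  unfolding opt_cost_def paths_to_def by (simp add: setcompr_eq_image)

lemma not_is_path_Nil [simp]: "\<not> is_path E []"
  unfolding is_path_def by simp

lemma is_path_singleton [simp]: "is_path E [u]"
  unfolding is_path_def by simp

lemma is_path_Cons_Cons [simp]: "is_path E (u # v # p) \<longleftrightarrow> (u, v) \<in> E \<and> is_path E (v # p)"
  unfolding is_path_def by (auto simp: nth_Cons split: nat.splits)

lemma path_cost_singleton [simp]: "path_cost c [u] = 0"
  unfolding path_cost_def by simp

lemma path_cost_Cons_Cons [simp]: "path_cost c (u # v # p) = c u v + path_cost c (v # p)"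
  unfolding path_cost_def by (simp add: sum.lessThan_Suc_shift del: sum.lessThan_Suc)

lemma paths_to_sink:
  assumes "E `` {t} = {}"
  shows "paths_to E t t = {[t]}"
proof -
  have "p = [t]" if "is_path E p" "hd p = t" for p
    using that assms by (cases p rule: remdups_adj.cases) auto
  then show ?thesis
    unfolding paths_to_def by auto
qed

lemma paths_to_Cons:
  assumes "u \<noteq> t"
  shows "paths_to E t u = (\<Union>v \<in> E `` {u}. (#) u ` paths_to E t v)"
proof (intro set_eqI iffI)
  fix p assume "p \<in> paths_to E t u"
  with assms obtain v q where "p = u # v # q" "(u, v) \<in> E" "v # q \<in> paths_to E t v"
    unfolding paths_to_def by (cases p rule: remdups_adj.cases) auto
  then show "p \<in> (\<Union>v \<in> E `` {u}. (#) u ` paths_to E t v)"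
    by blast
next
  fix p assume "p \<in> (\<Union>v \<in> E `` {u}. (#) u ` paths_to E t v)"
  then obtain v q where "p = u # q" "(u, v) \<in> E" "q \<in> paths_to E t v"
    by blast
  then show "p \<in> paths_to E t u"
    unfolding paths_to_def by (cases q) auto
qed

lemma acyclic_if_rank_decreasing:
  fixes rank :: "'a \<Rightarrow> nat"
  assumes "\<And>u v. (u, v) \<in> E \<Longrightarrow> rank v < rank u"
  shows "acyclic E"
proof -
  have "E\<inverse> \<subseteq> measure rank"
    using assms by auto
  then have "acyclic (E\<inverse>)"
    using wf_acyclic wf_measure wf_subset by blast
  then show ?thesis
    by simp
qed

definition biased_agent :: "nat set \<Rightarrow> (nat \<times> nat) set \<Rightarrow> (nat \<Rightarrow> nat \<Rightarrow> real) \<Rightarrow> nat \<Rightarrow> real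
     \<Rightarrow> (nat \<Rightarrow> real) \<Rightarrow> (nat \<Rightarrow> nat) \<Rightarrow> (nat \<Rightarrow> real) \<Rightarrow> bool" where
  "biased_agent V E c t b W S C \<longleftrightarrow>
     C t = 0 \<and>
     (\<forall>u\<in>V - {t}. (u, S u) \<in> E \<and>
        (\<forall>v. (u, v) \<in> E \<longrightarrow> b * c u (S u) + W (S u) \<le> b * c u v + W v) \<and>
        C u = c u (S u) + C (S u))"

lemma soph_agent_iff_biased_agent: "soph_agent V E c t b S C \<longleftrightarrow> biased_agent V E c t b C S C"
  unfolding soph_agent_def biased_agent_def ..

lemma naive_agent_iff_biased_agent:
  "naive_agent V E c t b S C \<longleftrightarrow> biased_agent V E c t b (opt_cost E c t) S C"
  unfolding naive_agent_def biased_agent_def ..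

lemma biased_agent_target: "biased_agent V E c t b W S C \<Longrightarrow> C t = 0"
  unfolding biased_agent_def by simp

lemma biased_agent_strictly_preferred_step:
  assumes agent: "biased_agent V E c t b W S C" and "u \<in> V" "u \<noteq> t" "(u, v) \<in> E"
    and preferred: "\<And>w. (u, w) \<in> E \<Longrightarrow> w \<noteq> v \<Longrightarrow> b * c u v + W v < b * c u w + W w"
  shows "C u = c u v + C v"
proof -
  from agent \<open>u \<in> V\<close> \<open>u \<noteq> t\<close> have "(u, S u) \<in> E" and "C u = c u (S u) + C (S u)"
    and "b * c u (S u) + W (S u) \<le> b * c u v + W v"
    using \<open>(u, v) \<in> E\<close> unfolding biased_agent_def by auto
  with preferred have "S u = v"
    by fastforce
  with \<open>C u = c u (S u) + C (S u)\<close> show ?thesis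
    by simp
qed

definition gadget_edges :: "(nat \<times> nat) set" where
  "gadget_edges = {(0, 2), (0, 4), (2, 1), (2, 3), (3, 1), (4, 1)}"

definition gadget_cost :: "real \<Rightarrow> real \<Rightarrow> real \<Rightarrow> nat \<Rightarrow> nat \<Rightarrow> real" where
  "gadget_cost P Q R u v =
     (if (u, v) = (0, 2) then 1 else if (u, v) = (2, 1) then P
      else if (u, v) = (3, 1) then Q else if (u, v) = (4, 1) then R else 0)"

lemma gadget_is_instance:
  assumes "0 \<le> P" "0 \<le> Q" "0 \<le> R"
  shows "is_instance {0, 1, 2, 3, 4} gadget_edges (gadget_cost P Q R) 0 1"
proof -
  have "acyclic gadget_edges"
    by (rule acyclic_if_rank_decreasing[where
          rank = "\<lambda>u. if u = 0 then 3 else if u = 1 then 0 else if u = 2 then 2 else 1"])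
      (auto simp: gadget_edges_def)
  with assms show ?thesis
    unfolding is_instance_def by (auto simp: gadget_edges_def gadget_cost_def)
qed

lemma gadget_successors:
  "gadget_edges `` {1} = {}" "gadget_edges `` {2} = {1, 3}"
  "gadget_edges `` {3} = {1}" "gadget_edges `` {4} = {1}"
  by (auto simp: gadget_edges_def)

lemma gadget_paths_to:
  "paths_to gadget_edges 1 1 = {[1]}"
  "paths_to gadget_edges 1 2 = {[2, 1], [2, 3, 1]}"
  "paths_to gadget_edges 1 3 = {[3, 1]}"
  "paths_to gadget_edges 1 4 = {[4, 1]}"
  \<comment> \<open>\<open>One_nat_def\<close> would turn the target \<open>1\<close> into \<open>Suc 0\<close> before these rules can match.\<close>
  by (simp_all add: paths_to_Cons paths_to_sink gadget_successors insert_commute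
      del: One_nat_def)

lemma gadget_opt_cost:
  assumes "P \<le> Q"
  shows "opt_cost gadget_edges (gadget_cost P Q R) 1 1 = 0"
    and "opt_cost gadget_edges (gadget_cost P Q R) 1 2 = P"
    and "opt_cost gadget_edges (gadget_cost P Q R) 1 3 = Q"
    and "opt_cost gadget_edges (gadget_cost P Q R) 1 4 = R"
  using assms by (simp_all add: opt_cost_eq_Min_paths_to gadget_paths_to gadget_cost_def
      del: One_nat_def)

lemma gadget_soph_cost:
  assumes "Q < b * P" "R < b + Q"
    and "soph_agent {0, 1, 2, 3, 4} gadget_edges (gadget_cost P Q R) 1 b S C"
  shows "C 0 = R"
proof -
  let ?c = "gadget_cost P Q R"
  have agent: "biased_agent {0, 1, 2, 3, 4} gadget_edges ?c 1 b C S C"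
    using assms(3) by (simp add: soph_agent_iff_biased_agent)
  note step = biased_agent_strictly_preferred_step[OF agent]
  have "C 1 = 0"
    using agent by (rule biased_agent_target)
  then have "C 3 = Q" and "C 4 = R"
    using step[of 3 1] step[of 4 1] by (simp_all add: gadget_cost_def gadget_edges_def)
  with \<open>C 1 = 0\<close> \<open>Q < b * P\<close> have "C 2 = Q"
    using step[of 2 3] by (simp add: gadget_cost_def gadget_edges_def)
  with \<open>C 4 = R\<close> \<open>R < b + Q\<close> show "C 0 = R"
    using step[of 0 4] by (simp add: gadget_cost_def gadget_edges_def)
qed

lemma gadget_naive_cost:
  assumes "P \<le> Q" "Q < b * P" "b + P < R"
    and "naive_agent {0, 1, 2, 3, 4} gadget_edges (gadget_cost P Q R) 1 b S C"
  shows "C 0 = 1 + Q"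
proof -
  let ?c = "gadget_cost P Q R"
  have agent: "biased_agent {0, 1, 2, 3, 4} gadget_edges ?c 1 b (opt_cost gadget_edges ?c 1) S C"
    using assms(4) by (simp add: naive_agent_iff_biased_agent)
  note step = biased_agent_strictly_preferred_step[OF agent]
  note opt = gadget_opt_cost[OF \<open>P \<le> Q\<close>, of R]
  have "C 1 = 0"
    using agent by (rule biased_agent_target)
  then have "C 3 = Q"
    using step[of 3 1] by (simp add: gadget_cost_def gadget_edges_def)
  with \<open>Q < b * P\<close> have "C 2 = Q"
    using step[of 2 3] opt by (simp add: gadget_cost_def gadget_edges_def)
  with \<open>b + P < R\<close> show "C 0 = 1 + Q"
    using step[of 0 2] opt by (simp add: gadget_cost_def gadget_edges_def)
qed

lemma gadget_parameters_exist:
  fixes b \<delta> :: real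
  assumes "b > 1" and "\<delta> > 0"
  obtains P Q R where "0 < P" "P < Q" "Q < b * P" "b + P < R" "R < b + Q"
    and "(b - \<delta>) * (1 + Q) < R"
proof
  define P where "P = \<delta> / b\<^sup>2"
  define Q where "Q = (1 + b) * P / 2"
  define R where "R = b + (3 + b) * P / 4"
  show "0 < P"
    using assms by (simp add: P_def)
  then show "P < Q" "Q < b * P" "b + P < R" "R < b + Q"
    using \<open>b > 1\<close> by (simp_all add: Q_def R_def field_simps)
  have "b * Q < \<delta>"
    using \<open>Q < b * P\<close> assms by (simp add: P_def power2_eq_square field_simps)
  have "(b - \<delta>) * (1 + Q) = b + (b * Q - \<delta>) - \<delta> * Q"
    by (simp add: algebra_simps)
  also have "\<dots> < b"
    using \<open>b * Q < \<delta>\<close> \<open>0 < P\<close> \<open>P < Q\<close> \<open>\<delta> > 0\<close> mult_pos_pos[of \<delta> Q] by linarith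
  also have "b < R"
    using \<open>b + P < R\<close> \<open>0 < P\<close> by simp
  finally show "(b - \<delta>) * (1 + Q) < R" .
qed

theorem claim1:
  fixes b \<delta> :: real
  assumes "b > 1" and "\<delta> > 0"
  shows "\<exists>V E c s t. is_instance V E c s t \<and>
           (\<forall>Ss Cs Sn Cn. soph_agent V E c t b Ss Cs \<longrightarrow> naive_agent V E c t b Sn Cn \<longrightarrow>
              Cn s > 0 \<and> Cs s \<ge> (b - \<delta>) * Cn s)"
proof -
  obtain P Q R where "0 < P" "P < Q" "Q < b * P" "b + P < R" "R < b + Q"
    and ratio: "(b - \<delta>) * (1 + Q) < R"
    using gadget_parameters_exist[OF assms] .
  show ?thesis
  proof (intro exI conjI allI impI)
    show "is_instance {0, 1, 2, 3, 4} gadget_edges (gadget_cost P Q R) 0 1"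
      using \<open>0 < P\<close> \<open>P < Q\<close> \<open>b + P < R\<close> \<open>b > 1\<close> by (intro gadget_is_instance) simp_all
    fix Ss Cs Sn Cn
    assume "soph_agent {0, 1, 2, 3, 4} gadget_edges (gadget_cost P Q R) 1 b Ss Cs"
      and "naive_agent {0, 1, 2, 3, 4} gadget_edges (gadget_cost P Q R) 1 b Sn Cn"
    then have "Cs 0 = R" and "Cn 0 = 1 + Q"
      using gadget_soph_cost[OF \<open>Q < b * P\<close> \<open>R < b + Q\<close>]
        gadget_naive_cost[OF less_imp_le[OF \<open>P < Q\<close>] \<open>Q < b * P\<close> \<open>b + P < R\<close>]
      by blast+
    with ratio \<open>0 < P\<close> \<open>P < Q\<close> show "Cn 0 > 0" "Cs 0 \<ge> (b - \<delta>) * Cn 0"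
      by simp_all
  qed
qed

end
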